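(* Consider the $(3+1)$-dimensional linear diffusion equation $U_t=U_{xx}+U_{yy}+U_{zz}$ for $U=U(x,y,z,t)$, and the nine linear differential operators (acting on differential functions of $x,y,z,t,U$ and the spatial derivatives of $U$, with $D_x,D_y,D_z$ the total derivatives) \[ R_1=2tD_x+x,\quad R_2=2tD_y+y,\quad R_3=2tD_z+z,\quad R_4=-xD_y+yD_x,\quad R_5=-xD_z+zD_x, \] \[ R_6=D_x,\quad R_7=-yD_z+zD_y,\quad R_8=D_y,\quad R_9=D_z . \] For an integer $n\ge 1$, let $\mathcal{S}_n$ be the real vector space spanned by the characteristics $R_{i_1}R_{i_2}\cdots R_{i_k}[U]$ with $0\le k\le n$ and $i_1,\dots,i_k\in\{1,\dots,9\}$ (the case $k=0$ being the characteristic $U$, and products meaning composition of operators). Then the number of linearly independent characteristics of generalized symmetries of order at most $n$ generated in this way, i.e. $\dim\mathcal{S}_n$, equals \[ N=\frac{(n+4)(n+3)^2(n+2)^2(n+1)}{144}. \] In particular $N=10,50,175,490$ for $n=1,2,3,4$.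
   Context: A generalized (evolutionary) symmetry of the equation is a vector field $Q\,\partial_U$ whose characteristic $Q$ satisfies $D_tQ=D_x^2Q+D_y^2Q+D_z^2Q$ on solutions; the operators $R_1,\dots,R_9$ map characteristics of linear generalized symmetries to characteristics of linear generalized symmetries (they are recursion operators, coming from the Lie point symmetries $2t\partial_x-xU\partial_U$, $2t\partial_y-yU\partial_U$, $2t\partial_z-zU\partial_U$, rotations and spatial translations). The order of a characteristic is the highest order of derivative of $U$ it involves. *)

theory Defs
  imports Complex_Main "HOL-Library.Function_Algebras"
begin

text \<open>A linear differential function with polynomial coefficients, i.e. a finite
  real combination of terms  x^a y^b z^c t^d U_{x^i y^j z^k}  (U_{x^i y^j z^k} the
  mixed spatial derivative of U), is encoded by its coefficient function:
  chr ((a,b,c,d),(i,j,k)) is the coefficient of  x^a y^b z^c t^d U_{x^i y^j z^k}.\<close>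

type_synonym mon = "nat \<times> nat \<times> nat \<times> nat"
type_synonym der = "nat \<times> nat \<times> nat"
type_synonym chr = "mon \<times> der \<Rightarrow> real"

definition U_chr :: chr where
  "U_chr = (\<lambda>m. if m = ((0,0,0,0),(0,0,0)) then 1 else 0)"

definition mulx :: "chr \<Rightarrow> chr" where
  "mulx f = (\<lambda>((a,b,c,d),e). if a > 0 then f ((a-1,b,c,d),e) else 0)"
definition muly :: "chr \<Rightarrow> chr" where
  "muly f = (\<lambda>((a,b,c,d),e). if b > 0 then f ((a,b-1,c,d),e) else 0)"
definition mulz :: "chr \<Rightarrow> chr" where
  "mulz f = (\<lambda>((a,b,c,d),e). if c > 0 then f ((a,b,c-1,d),e) else 0)"
definition mult :: "chr \<Rightarrow> chr" where
  "mult f = (\<lambda>((a,b,c,d),e). if d > 0 then f ((a,b,c,d-1),e) else 0)"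

text \<open>total derivatives: D_x (x^a.. U_(i,j,k)) = a x^(a-1).. U_(i,j,k) + x^a.. U_(i+1,j,k)\<close>
definition Dx :: "chr \<Rightarrow> chr" where
  "Dx f = (\<lambda>((a,b,c,d),(i,j,k)). real (a+1) * f ((a+1,b,c,d),(i,j,k))
      + (if i > 0 then f ((a,b,c,d),(i-1,j,k)) else 0))"
definition Dy :: "chr \<Rightarrow> chr" where
  "Dy f = (\<lambda>((a,b,c,d),(i,j,k)). real (b+1) * f ((a,b+1,c,d),(i,j,k))
      + (if j > 0 then f ((a,b,c,d),(i,j-1,k)) else 0))"
definition Dz :: "chr \<Rightarrow> chr" where
  "Dz f = (\<lambda>((a,b,c,d),(i,j,k)). real (c+1) * f ((a,b,c+1,d),(i,j,k))
      + (if k > 0 then f ((a,b,c,d),(i,j,k-1)) else 0))"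

definition R :: "nat \<Rightarrow> chr \<Rightarrow> chr" where
  "R i f = (if i = 1 then (\<lambda>m. 2 * mult (Dx f) m + mulx f m)
       else if i = 2 then (\<lambda>m. 2 * mult (Dy f) m + muly f m)
       else if i = 3 then (\<lambda>m. 2 * mult (Dz f) m + mulz f m)
       else if i = 4 then (\<lambda>m. - mulx (Dy f) m + muly (Dx f) m)
       else if i = 5 then (\<lambda>m. - mulx (Dz f) m + mulz (Dx f) m)
       else if i = 6 then Dx f
       else if i = 7 then (\<lambda>m. - muly (Dz f) m + mulz (Dy f) m)
       else if i = 8 then Dy f
       else Dz f)"

definition Rword :: "nat list \<Rightarrow> chr" where
  "Rword w = foldr R w U_chr"

definition chr_scale :: "real \<Rightarrow> chr \<Rightarrow> chr" where
  "chr_scale r f = (\<lambda>m. r * f m)"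

definition S :: "nat \<Rightarrow> chr set" where
  "S n = module.span chr_scale
     {Rword w | w. length w \<le> n \<and> set w \<subseteq> {1..9}}"

end

theory Submission
  imports Defs "HOL-Library.Product_Lexorder"
begin

(* The operators R_1, R_2, R_3 and R_6, R_8, R_9 satisfy the Weyl relations
   [R_6, R_1] = [R_8, R_2] = [R_9, R_3] = 1, all other pairs commuting, and the rotations are
   R_4 = R_2 R_6 - R_1 R_8, R_5 = R_3 R_6 - R_1 R_9, R_7 = R_3 R_8 - R_2 R_9.  Hence the R_i span
   a Lie algebra, commutators shorten words, and modulo S (n - 1) every word of length n equals
   the ordered product R_1^e_1 ... R_9^e_9 U with the same letter counts e.  Five quadratic
   relations further rewrite ordered products containing one of the pairs {2,6}, {3,6}, {3,8},
   {2,5}, {6,7} into smaller ones, so S n is spanned by the standard products avoiding them.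
   These are linearly independent: for a monomial order on t-free monomials, R_i shifts the
   leading monomial of a characteristic by a fixed monomial, and the leading monomial of a
   standard product determines its exponents.  Finally the standard exponent vectors of degree
   at most n fall into five boxes, counted by C(n+6,6) + 3 C(n+5,6) + C(n+4,6) = N. *)

section \<open>Relations among the recursion operators\<close>

lemmas R_defs = R_def Dx_def Dy_def Dz_def mulx_def muly_def mulz_def mult_def

lemma R_add: "R i (f + g) = R i f + R i g"
  and R_diff: "R i (f - g) = R i f - R i g"
  and R_uminus: "R i (- f) = - R i f"
  and R_zero: "R i 0 = 0"
  and R_scale: "R i (chr_scale c f) = chr_scale c (R i f)"
  by (simp_all add: fun_eq_iff R_defs chr_scale_def algebra_simps split: prod.split)

lemma R_weyl_relations:
  "R 6 (R 1 f) = R 1 (R 6 f) + f"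
  "R 8 (R 2 f) = R 2 (R 8 f) + f"
  "R 9 (R 3 f) = R 3 (R 9 f) + f"
  "R 6 (R 2 f) = R 2 (R 6 f)"
  "R 6 (R 3 f) = R 3 (R 6 f)"
  "R 8 (R 1 f) = R 1 (R 8 f)"
  "R 8 (R 3 f) = R 3 (R 8 f)"
  "R 9 (R 1 f) = R 1 (R 9 f)"
  "R 9 (R 2 f) = R 2 (R 9 f)"
  "R 2 (R 1 f) = R 1 (R 2 f)"
  "R 3 (R 1 f) = R 1 (R 3 f)"
  "R 3 (R 2 f) = R 2 (R 3 f)"
  "R 8 (R 6 f) = R 6 (R 8 f)"
  "R 9 (R 6 f) = R 6 (R 9 f)"
  "R 9 (R 8 f) = R 8 (R 9 f)"
  by (simp_all add: fun_eq_iff R_defs algebra_simps split: prod.split)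

lemma R_rotations:
  "R 4 f = R 2 (R 6 f) - R 1 (R 8 f)"
  "R 5 f = R 3 (R 6 f) - R 1 (R 9 f)"
  "R 7 f = R 3 (R 8 f) - R 2 (R 9 f)"
  by (simp_all add: fun_eq_iff R_defs algebra_simps split: prod.split)

lemmas R_weyl_normalize = R_rotations R_add R_diff R_uminus R_zero R_weyl_relations

lemma R_commutators:
  "R 1 (R 2 f) - R 2 (R 1 f) = 0"
  "R 1 (R 3 f) - R 3 (R 1 f) = 0"
  "R 1 (R 4 f) - R 4 (R 1 f) = - R 2 f"
  "R 1 (R 5 f) - R 5 (R 1 f) = - R 3 f"
  "R 1 (R 6 f) - R 6 (R 1 f) = - f"
  "R 1 (R 7 f) - R 7 (R 1 f) = 0"
  "R 1 (R 8 f) - R 8 (R 1 f) = 0"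
  "R 1 (R 9 f) - R 9 (R 1 f) = 0"
  "R 2 (R 3 f) - R 3 (R 2 f) = 0"
  "R 2 (R 4 f) - R 4 (R 2 f) = R 1 f"
  "R 2 (R 5 f) - R 5 (R 2 f) = 0"
  "R 2 (R 6 f) - R 6 (R 2 f) = 0"
  "R 2 (R 7 f) - R 7 (R 2 f) = - R 3 f"
  "R 2 (R 8 f) - R 8 (R 2 f) = - f"
  "R 2 (R 9 f) - R 9 (R 2 f) = 0"
  "R 3 (R 4 f) - R 4 (R 3 f) = 0"
  "R 3 (R 5 f) - R 5 (R 3 f) = R 1 f"
  "R 3 (R 6 f) - R 6 (R 3 f) = 0"
  "R 3 (R 7 f) - R 7 (R 3 f) = R 2 f"
  "R 3 (R 8 f) - R 8 (R 3 f) = 0"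
  "R 3 (R 9 f) - R 9 (R 3 f) = - f"
  "R 4 (R 5 f) - R 5 (R 4 f) = R 7 f"
  "R 4 (R 6 f) - R 6 (R 4 f) = R 8 f"
  "R 4 (R 7 f) - R 7 (R 4 f) = - R 5 f"
  "R 4 (R 8 f) - R 8 (R 4 f) = - R 6 f"
  "R 4 (R 9 f) - R 9 (R 4 f) = 0"
  "R 5 (R 6 f) - R 6 (R 5 f) = R 9 f"
  "R 5 (R 7 f) - R 7 (R 5 f) = R 4 f"
  "R 5 (R 8 f) - R 8 (R 5 f) = 0"
  "R 5 (R 9 f) - R 9 (R 5 f) = - R 6 f"
  "R 6 (R 7 f) - R 7 (R 6 f) = 0"
  "R 6 (R 8 f) - R 8 (R 6 f) = 0"
  "R 6 (R 9 f) - R 9 (R 6 f) = 0"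
  "R 7 (R 8 f) - R 8 (R 7 f) = R 9 f"
  "R 7 (R 9 f) - R 9 (R 7 f) = - R 8 f"
  "R 8 (R 9 f) - R 9 (R 8 f) = 0"
  by (simp_all only: R_weyl_normalize) (simp_all add: algebra_simps)

lemma R_straightening:
  "R 2 (R 6 f) = R 1 (R 8 f) + R 4 f"
  "R 3 (R 6 f) = R 1 (R 9 f) + R 5 f"
  "R 3 (R 8 f) = R 2 (R 9 f) + R 7 f"
  "R 2 (R 5 f) = R 1 (R 7 f) + R 3 (R 4 f)"
  "R 6 (R 7 f) = R 8 (R 5 f) - R 9 (R 4 f)"
  by (simp_all only: R_weyl_normalize) (simp_all add: algebra_simps)

section \<open>Spanning by standard ordered products\<close>

interpretation chr: vector_space chr_scale
  by unfold_locales (auto simp: chr_scale_def algebra_simps fun_eq_iff)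

lemma S_eq_span: "S n = chr.span {Rword w | w. length w \<le> n \<and> set w \<subseteq> {1..9}}"
  by (simp add: S_def)

lemma Rword_Cons [simp]: "Rword (a # w) = R a (Rword w)"
  by (simp add: Rword_def)

lemma Rword_in_S: "length w \<le> n \<Longrightarrow> set w \<subseteq> {1..9} \<Longrightarrow> Rword w \<in> S n"
  unfolding S_eq_span by (rule chr.span_base) blast

lemma S_mono: "m \<le> n \<Longrightarrow> S m \<subseteq> S n"
  unfolding S_eq_span by (rule chr.span_mono) auto

lemma S_subspace: "chr.subspace (S n)"
  unfolding S_eq_span by simp

lemma S_zero: "0 \<in> S n"
  and S_add: "f \<in> S n \<Longrightarrow> g \<in> S n \<Longrightarrow> f + g \<in> S n"
  and S_uminus: "f \<in> S n \<Longrightarrow> - f \<in> S n"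
  unfolding S_eq_span by (auto intro: chr.span_zero chr.span_add chr.span_neg)

lemma R_in_S:
  assumes a: "a \<in> {1..9}" and f: "f \<in> S m"
  shows "R a f \<in> S (Suc m)"
proof -
  have "S m \<subseteq> {f. R a f \<in> S (Suc m)}"
    unfolding S_eq_span[of m]
  proof (rule chr.span_minimal)
    show "{Rword w |w. length w \<le> m \<and> set w \<subseteq> {1..9}} \<subseteq> {f. R a f \<in> S (Suc m)}"
      using a by (auto intro!: Rword_in_S[of "a # _", simplified])
    show "chr.subspace {f. R a f \<in> S (Suc m)}"
      using S_subspace[of "Suc m"]
      by (auto simp: chr.subspace_def R_add R_zero R_scale)
  qed
  then show ?thesis using f by blast
qed

lemma R_diff_in_S: "a \<in> {1..9} \<Longrightarrow> f - g \<in> S m \<Longrightarrow> R a f - R a g \<in> S (Suc m)"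
  using R_in_S[of a "f - g" m] by (simp add: R_diff)

lemma one_to_nine_cases:
  "(i::nat) \<in> {1..9} \<Longrightarrow> i = 1 \<or> i = 2 \<or> i = 3 \<or> i = 4 \<or> i = 5 \<or> i = 6 \<or> i = 7 \<or> i = 8 \<or> i = 9"
  by auto

lemma R_commutator_in_S:
  assumes i: "i \<in> {1..9}" and j: "j \<in> {1..9}" and X: "X \<in> S m"
  shows "R i (R j X) - R j (R i X) \<in> S (Suc m)"
proof -
  have lower: "X \<in> S (Suc m)" "- X \<in> S (Suc m)" "0 \<in> S (Suc m)"
    using X S_mono[of m "Suc m"] S_uminus S_zero by auto
  have R_lower: "R k X \<in> S (Suc m)" "- R k X \<in> S (Suc m)" if "k \<in> {1..9}" for k
    using R_in_S[OF that X] S_uminus by auto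
  have ordered: "R i (R j X) - R j (R i X) \<in> S (Suc m)"
    if "i < j" "i \<in> {1..9}" "j \<in> {1..9}" for i j
    using one_to_nine_cases[OF that(2)] one_to_nine_cases[OF that(3)] that(1)
    by (elim disjE) (simp_all only: R_commutators, simp_all add: lower R_lower)
  show ?thesis
  proof (cases i j rule: linorder_cases)
    case greater
    then show ?thesis using S_uminus[OF ordered[OF greater j i]] by simp
  qed (use ordered[OF _ i j] lower in simp_all)
qed

lemma Rword_move_letter_in_S:
  assumes a: "a \<in> {1..9}" and p: "set p \<subseteq> {1..9}" and q: "set q \<subseteq> {1..9}"
  shows "Rword (a # p @ q) - Rword (p @ a # q) \<in> S (length p + length q)"
  using p
proof (induction p)
  case Nil
  have "Rword (a # [] @ q) - Rword ([] @ a # q) = 0" by simp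
  then show ?case using S_zero by (simp only:)
next
  case (Cons b p)
  then have b: "b \<in> {1..9}" and p: "set p \<subseteq> {1..9}" by auto
  let ?X = "Rword (p @ q)"
  have "?X \<in> S (length p + length q)"
    using Rword_in_S p q by auto
  then have "R a (R b ?X) - R b (R a ?X) \<in> S (Suc (length p + length q))"
    by (rule R_commutator_in_S[OF a b])
  moreover have "R b (Rword (a # p @ q)) - R b (Rword (p @ a # q)) \<in> S (Suc (length p + length q))"
    using R_diff_in_S[OF b Cons.IH[OF p]] .
  ultimately have "(R a (R b ?X) - R b (R a ?X)) + (R b (Rword (a # p @ q)) - R b (Rword (p @ a # q)))
      \<in> S (Suc (length p + length q))"
    by (rule S_add)
  then show ?case
    by (simp only: Rword_Cons append_Cons length_Cons add_Suc add_diff_eq diff_add_cancel)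
qed

definition ordered_word :: "(nat \<Rightarrow> nat) \<Rightarrow> nat list" where
  "ordered_word e = concat (map (\<lambda>i. replicate (e i) i) [1..<10])"

definition Rordered :: "(nat \<Rightarrow> nat) \<Rightarrow> chr" where
  "Rordered e = Rword (ordered_word e)"

definition deg :: "(nat \<Rightarrow> nat) \<Rightarrow> nat" where
  "deg e = (\<Sum>i\<in>{1..9}. e i)"

definition incr :: "nat \<Rightarrow> (nat \<Rightarrow> nat) \<Rightarrow> nat \<Rightarrow> nat" where
  "incr a e = e(a := Suc (e a))"

lemma incr_apply: "incr a e i = (if i = a then Suc (e a) else e i)"
  by (simp add: incr_def)

lemma set_ordered_word: "set (ordered_word e) \<subseteq> {1..9}"
  by (auto simp: ordered_word_def)

lemma length_ordered_word: "length (ordered_word e) = deg e"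
proof -
  have "length (ordered_word e) = sum_list (map e [1..<10])"
    by (simp add: ordered_word_def length_concat comp_def)
  also have "\<dots> = sum e {1..<10}"
    by (simp add: sum_list_distinct_conv_sum_set)
  also have "{1..<10} = {1..(9::nat)}"
    by auto
  finally show ?thesis
    by (simp add: deg_def)
qed

lemma Rordered_in_S: "deg e \<le> n \<Longrightarrow> Rordered e \<in> S n"
  unfolding Rordered_def using Rword_in_S length_ordered_word set_ordered_word by metis

lemma deg_incr: "a \<in> {1..9} \<Longrightarrow> deg (incr a e) = Suc (deg e)"
proof -
  assume a: "a \<in> {1..9}"
  have "deg (incr a e) = (\<Sum>i\<in>{1..9}. e i + (if i = a then 1 else 0))"
    unfolding deg_def incr_def by (rule sum.cong) auto
  also have "\<dots> = Suc (deg e)"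
    using a by (simp add: sum.distrib deg_def)
  finally show ?thesis .
qed

lemma ordered_word_incr:
  assumes a: "a \<in> {1..9}"
  obtains p q where "ordered_word e = p @ q" "ordered_word (incr a e) = p @ a # q"
proof -
  have split: "[1..<10] = [1..<a] @ a # [Suc a..<10]"
    using a upt_add_eq_append[of 1 a "10 - a"] upt_conv_Cons[of a 10] by simp
  let ?p = "concat (map (\<lambda>i. replicate (e i) i) [1..<a])"
  let ?q = "replicate (e a) a @ concat (map (\<lambda>i. replicate (e i) i) [Suc a..<10])"
  have unchanged: "map (\<lambda>i. replicate (incr a e i) i) [1..<a] = map (\<lambda>i. replicate (e i) i) [1..<a]"
    "map (\<lambda>i. replicate (incr a e i) i) [Suc a..<10] = map (\<lambda>i. replicate (e i) i) [Suc a..<10]"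
    by (auto simp: incr_def)
  have "incr a e a = Suc (e a)"
    by (simp add: incr_def)
  then have "ordered_word (incr a e) = ?p @ a # ?q"
    unfolding ordered_word_def split map_append list.map concat_append unchanged by simp
  moreover have "ordered_word e = ?p @ ?q"
    unfolding ordered_word_def split by simp
  ultimately show ?thesis
    using that by blast
qed

lemma Rordered_incr_congr:
  assumes a: "a \<in> {1..9}"
  shows "R a (Rordered e) - Rordered (incr a e) \<in> S (deg e)"
proof -
  obtain p q where pq: "ordered_word e = p @ q" "ordered_word (incr a e) = p @ a # q"
    using ordered_word_incr[OF a] .
  have "set p \<subseteq> {1..9}" "set q \<subseteq> {1..9}"
    using set_ordered_word[of e] pq(1) by auto
  from Rword_move_letter_in_S[OF a this] show ?thesis
    using length_ordered_word[of e] pq by (simp add: Rordered_def)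
qed

lemma count_list_Cons_incr: "count_list (a # w) = incr a (count_list w)"
  by (simp add: incr_def fun_eq_iff)

lemma deg_count_list: "set w \<subseteq> {1..9} \<Longrightarrow> deg (count_list w) = length w"
proof (induction w)
  case Nil
  show ?case by (simp add: deg_def)
next
  case (Cons a w)
  then show ?case by (simp add: count_list_Cons_incr deg_incr)
qed

lemma Rword_congr_Rordered:
  assumes "set w \<subseteq> {1..9}"
  shows "Rword w - Rordered (count_list w) \<in> S (length w - 1)"
  using assms
proof (induction w)
  case Nil
  have "Rordered (count_list []) = Rword []"
    by (simp add: Rordered_def ordered_word_def map_replicate_const)
  then show ?case
    using S_zero by (simp only: diff_self)
next
  case (Cons a w)
  then have a: "a \<in> {1..9}" and w: "set w \<subseteq> {1..9}" by auto
  have "R a (Rword w) - R a (Rordered (count_list w)) \<in> S (length w)"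
  proof (cases w)
    case Nil
    then show ?thesis
      using S_zero by (simp add: Rordered_def ordered_word_def map_replicate_const)
  next
    case (Cons b v)
    then have "Suc (length w - 1) = length w" by simp
    with R_diff_in_S[OF a Cons.IH[OF w]] show ?thesis by (simp only:)
  qed
  moreover have "R a (Rordered (count_list w)) - Rordered (count_list (a # w)) \<in> S (length w)"
    using Rordered_incr_congr[OF a, of "count_list w"] deg_count_list[OF w]
    by (simp add: count_list_Cons_incr)
  ultimately have "(R a (Rword w) - R a (Rordered (count_list w)))
      + (R a (Rordered (count_list w)) - Rordered (count_list (a # w))) \<in> S (length w)"
    by (rule S_add)
  then show ?case
    by (simp only: length_Cons diff_Suc_1 add_diff_eq diff_add_cancel Rword_Cons)
qed

definition exponents :: "(nat \<Rightarrow> nat) set" where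
  "exponents = {e. \<forall>i. i \<notin> {1..9} \<longrightarrow> e i = 0}"

definition standard :: "(nat \<Rightarrow> nat) \<Rightarrow> bool" where
  "standard e \<longleftrightarrow> \<not> (0 < e 2 \<and> 0 < e 6) \<and> \<not> (0 < e 3 \<and> 0 < e 6) \<and> \<not> (0 < e 3 \<and> 0 < e 8)
     \<and> \<not> (0 < e 2 \<and> 0 < e 5) \<and> \<not> (0 < e 6 \<and> 0 < e 7)"

definition std_exponents :: "nat \<Rightarrow> (nat \<Rightarrow> nat) set" where
  "std_exponents k = {e \<in> exponents. deg e \<le> k \<and> standard e}"

definition std_span :: "nat \<Rightarrow> chr set" where
  "std_span k = chr.span (Rordered ` std_exponents k)"

(* The straightening relations trade the pairs {2,6}, {3,6}, {6,7} for pairs without 6,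
   {3,8} for {2,9}, and {2,5} for {1,7} and {3,4}; so they decrease this order. *)
definition straighten_order :: "((nat \<Rightarrow> nat) \<times> (nat \<Rightarrow> nat)) set" where
  "straighten_order = measures [\<lambda>e. e 6, \<lambda>e. e 8, \<lambda>e. e 9, \<lambda>e. e 5]"

lemma incr_in_exponents: "a \<in> {1..9} \<Longrightarrow> e \<in> exponents \<Longrightarrow> incr a e \<in> exponents"
  by (auto simp: exponents_def incr_def)

lemma exponents_decompose:
  assumes "e \<in> exponents" "a \<in> {1..9}" "b \<in> {1..9}" "a \<noteq> b" "0 < e a" "0 < e b"
  obtains e0 where "e = incr a (incr b e0)" "e0 \<in> exponents"
proof
  let ?e0 = "e(a := e a - 1, b := e b - 1)"
  show "e = incr a (incr b ?e0)"
    using assms by (auto simp: incr_def fun_eq_iff)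
  show "?e0 \<in> exponents"
    using assms by (auto simp: exponents_def)
qed

lemma R_Rordered_in_S: "a \<in> {1..9} \<Longrightarrow> R a (Rordered e) \<in> S (Suc (deg e))"
  using R_in_S Rordered_in_S by blast

lemma Rordered_incr2_congr:
  assumes a: "a \<in> {1..9}" and b: "b \<in> {1..9}"
  shows "R a (R b (Rordered e)) - Rordered (incr a (incr b e)) \<in> S (Suc (deg e))"
proof -
  have "R a (R b (Rordered e)) - R a (Rordered (incr b e)) \<in> S (Suc (deg e))"
    using R_diff_in_S[OF a Rordered_incr_congr[OF b]] .
  moreover have "R a (Rordered (incr b e)) - Rordered (incr a (incr b e)) \<in> S (Suc (deg e))"
    using Rordered_incr_congr[OF a, of "incr b e"] deg_incr[OF b] by simp
  ultimately show ?thesis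
    using S_add by (fastforce simp only: add_diff_eq diff_add_cancel)
qed

lemma R2_Rordered_in_subspace_iff:
  assumes "a \<in> {1..9}" "b \<in> {1..9}" and V: "chr.subspace V" "S (Suc (deg e)) \<subseteq> V"
  shows "R a (R b (Rordered e)) \<in> V \<longleftrightarrow> Rordered (incr a (incr b e)) \<in> V"
proof -
  let ?X = "R a (R b (Rordered e))" and ?Y = "Rordered (incr a (incr b e))"
  have diff: "?X - ?Y \<in> V"
    using Rordered_incr2_congr[OF assms(1,2)] V(2) by blast
  show ?thesis
  proof
    assume "?X \<in> V"
    from chr.subspace_diff[OF V(1) this diff] show "?Y \<in> V"
      by (simp only: diff_diff_eq2 add_diff_cancel_left')
  next
    assume "?Y \<in> V"
    from chr.subspace_add[OF V(1) diff this] show "?X \<in> V"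
      by (simp only: diff_add_cancel)
  qed
qed

definition lower_span :: "(nat \<Rightarrow> nat) \<Rightarrow> chr set" where
  "lower_span e = chr.span (Rordered ` {e' \<in> exponents. deg e' = deg e \<and> (e', e) \<in> straighten_order}
                              \<union> S (deg e - 1))"

lemma lower_span_subspace: "chr.subspace (lower_span e)"
  by (simp add: lower_span_def)

lemma S_subset_lower_span:
  assumes "e = incr a (incr b e0)" "a \<in> {1..9}" "b \<in> {1..9}"
  shows "S (Suc (deg e0)) \<subseteq> lower_span e"
proof -
  have "S (deg e - 1) \<subseteq> lower_span e"
    unfolding lower_span_def using chr.span_superset by blast
  moreover have "deg e - 1 = Suc (deg e0)"
    using assms by (simp add: deg_incr)
  ultimately show ?thesis
    by simp
qed

lemma R_in_lower_span:
  assumes "e = incr a (incr b e0)" "a \<in> {1..9}" "b \<in> {1..9}" "g \<in> {1..9}"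
  shows "R g (Rordered e0) \<in> lower_span e"
  using S_subset_lower_span[OF assms(1-3)] R_Rordered_in_S[OF assms(4)] by blast

lemma R2_in_lower_span:
  assumes "e = incr a (incr b e0)" "a \<in> {1..9}" "b \<in> {1..9}" "e0 \<in> exponents"
    and "c \<in> {1..9}" "d \<in> {1..9}" "(incr c (incr d e0), e) \<in> straighten_order"
  shows "R c (R d (Rordered e0)) \<in> lower_span e"
proof -
  have "Rordered (incr c (incr d e0)) \<in> lower_span e"
    unfolding lower_span_def
    using assms by (intro chr.span_base) (auto simp: deg_incr incr_in_exponents)
  then show ?thesis
    using R2_Rordered_in_subspace_iff[OF assms(5,6) lower_span_subspace S_subset_lower_span[OF assms(1-3)]]
    by blast
qed

lemma Rordered_in_lower_spanI:
  assumes e: "e \<in> exponents" and ab: "a \<in> {1..9}" "b \<in> {1..9}" "a \<noteq> b" "0 < e a" "0 < e b"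
    and step: "\<And>e0. e = incr a (incr b e0) \<Longrightarrow> e0 \<in> exponents \<Longrightarrow> R a (R b (Rordered e0)) \<in> lower_span e"
  shows "Rordered e \<in> lower_span e"
proof -
  obtain e0 where e0: "e = incr a (incr b e0)" "e0 \<in> exponents"
    using exponents_decompose[OF e ab] .
  have "R a (R b (Rordered e0)) \<in> lower_span e"
    using step[OF e0] .
  then show ?thesis
    using R2_Rordered_in_subspace_iff[OF ab(1,2) lower_span_subspace S_subset_lower_span[OF e0(1) ab(1,2)]] e0(1)
    by simp
qed

lemma Rordered_in_lower_span_by_relation:
  assumes e: "e \<in> exponents" and ab: "a \<in> {1..9}" "b \<in> {1..9}" "a \<noteq> b" "0 < e a" "0 < e b"
    and cd: "c \<in> {1..9}" "d \<in> {1..9}" and rel: "\<And>f. R a (R b f) = R c (R d f) + h f"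
    and smaller: "\<And>e0. (incr c (incr d e0), incr a (incr b e0)) \<in> straighten_order"
    and h: "\<And>e0. e = incr a (incr b e0) \<Longrightarrow> e0 \<in> exponents \<Longrightarrow> h (Rordered e0) \<in> lower_span e"
  shows "Rordered e \<in> lower_span e"
proof (rule Rordered_in_lower_spanI[OF e ab])
  fix e0 assume e0: "e = incr a (incr b e0)" "e0 \<in> exponents"
  have "R c (R d (Rordered e0)) \<in> lower_span e"
    using R2_in_lower_span[OF e0(1) ab(1,2) e0(2) cd] smaller e0(1) by blast
  then show "R a (R b (Rordered e0)) \<in> lower_span e"
    unfolding rel using h[OF e0] by (rule chr.subspace_add[OF lower_span_subspace])
qed

lemma Rordered_nonstandard:
  assumes e: "e \<in> exponents" and "\<not> standard e"
  shows "Rordered e \<in> lower_span e"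
proof -
  note by_relation = Rordered_in_lower_span_by_relation[OF e]
  note lower = R_in_lower_span R2_in_lower_span chr.subspace_neg[OF lower_span_subspace]
  consider "0 < e 2 \<and> 0 < e 6" | "0 < e 3 \<and> 0 < e 6" | "0 < e 3 \<and> 0 < e 8"
    | "0 < e 2 \<and> 0 < e 5" | "0 < e 6 \<and> 0 < e 7"
    using assms(2) unfolding standard_def by blast
  then show ?thesis
  proof cases
    case 1
    show ?thesis
      by (rule by_relation[of 2 6 1 8 "R 4"])
        (use 1 in \<open>auto simp: R_straightening straighten_order_def incr_apply intro: lower\<close>)
  next
    case 2
    show ?thesis
      by (rule by_relation[of 3 6 1 9 "R 5"])
        (use 2 in \<open>auto simp: R_straightening straighten_order_def incr_apply intro: lower\<close>)
  next
    case 3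
    show ?thesis
      by (rule by_relation[of 3 8 2 9 "R 7"])
        (use 3 in \<open>auto simp: R_straightening straighten_order_def incr_apply intro: lower\<close>)
  next
    case 4
    show ?thesis
      by (rule by_relation[of 2 5 1 7 "\<lambda>f. R 3 (R 4 f)"])
        (use 4 in \<open>auto simp: R_straightening straighten_order_def incr_apply intro: lower\<close>)
  next
    case 5
    have "- R 9 (R 4 (Rordered e0)) \<in> lower_span e" if "e = incr 6 (incr 7 e0)" "e0 \<in> exponents" for e0
      using that by (intro lower(3) lower(2)) (auto simp: straighten_order_def incr_apply)
    then show ?thesis
      by (intro by_relation[of 6 7 8 5 "\<lambda>f. - R 9 (R 4 f)"])
        (use 5 in \<open>auto simp: R_straightening straighten_order_def incr_apply\<close>)
  qed
qed

lemma std_span_subspace: "chr.subspace (std_span k)"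
  by (simp add: std_span_def)

lemma std_span_mono: "k \<le> k' \<Longrightarrow> std_span k \<subseteq> std_span k'"
  unfolding std_span_def std_exponents_def by (rule chr.span_mono) auto

lemma wf_straighten_order: "wf straighten_order"
  by (simp add: straighten_order_def)

lemma Rordered_in_std_span:
  assumes lower: "S (k - 1) \<subseteq> std_span k"
  shows "e \<in> exponents \<Longrightarrow> deg e = k \<Longrightarrow> Rordered e \<in> std_span k"
proof (induction e rule: wf_induct_rule[OF wf_straighten_order])
  case (1 e)
  show ?case
  proof (cases "standard e")
    case True
    then have "e \<in> std_exponents k"
      using "1.prems" by (simp add: std_exponents_def)
    then show ?thesis
      unfolding std_span_def by (intro chr.span_base imageI)
  next
    case False
    have "lower_span e \<subseteq> std_span k"
      unfolding lower_span_def
      using "1.IH" "1.prems"(2) lower by (intro chr.span_minimal std_span_subspace) auto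
    then show ?thesis
      using Rordered_nonstandard[OF "1.prems"(1) False] by blast
  qed
qed

lemma count_list_in_exponents: "set w \<subseteq> {1..9} \<Longrightarrow> count_list w \<in> exponents"
  by (auto simp: exponents_def count_list_0_iff)

lemma Rword_in_std_span_length:
  assumes w: "set w \<subseteq> {1..9}" and lower: "S (length w - 1) \<subseteq> std_span (length w)"
  shows "Rword w \<in> std_span (length w)"
proof -
  have "Rword w - Rordered (count_list w) \<in> std_span (length w)"
    using Rword_congr_Rordered[OF w] lower by blast
  moreover have "Rordered (count_list w) \<in> std_span (length w)"
    using Rordered_in_std_span[OF lower count_list_in_exponents[OF w] deg_count_list[OF w]] .
  ultimately show ?thesis
    using chr.subspace_add[OF std_span_subspace] by fastforce
qed

lemma S_subset_std_span: "S k \<subseteq> std_span k"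
proof (induction k rule: less_induct)
  case (less k)
  show ?case
    unfolding S_eq_span
  proof (rule chr.span_minimal[OF _ std_span_subspace], safe)
    fix w :: "nat list"
    assume len: "length w \<le> k" and w: "set w \<subseteq> {1..9}"
    show "Rword w \<in> std_span k"
    proof (cases "length w < k")
      case True
      then have "Rword w \<in> std_span (length w)"
        using less.IH Rword_in_S[OF order_refl w] by blast
      then show ?thesis
        using std_span_mono[of "length w" k] True by auto
    next
      case False
      then have k: "length w = k"
        using len by simp
      show ?thesis
      proof (cases w)
        case Nil
        have "count_list w \<in> std_exponents k"
          using Nil by (simp add: std_exponents_def exponents_def standard_def deg_def)
        moreover have "Rword w = Rordered (count_list w)"
          using Nil by (simp add: Rordered_def ordered_word_def map_replicate_const)
        ultimately show ?thesis
          unfolding std_span_def by (simp add: chr.span_base)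
      next
        case Cons
        then have "S (length w - 1) \<subseteq> std_span (length w)"
          using less.IH[of "k - 1"] std_span_mono[of "k - 1" k] k by auto
        then show ?thesis
          using Rword_in_std_span_length[OF w] k by simp
      qed
    qed
  qed
qed

section \<open>Independence via leading monomials\<close>

definition t_free :: "mon \<times> der \<Rightarrow> bool" where
  "t_free K = (case K of ((a, b, c, d), e) \<Rightarrow> d = 0)"

definition rank :: "mon \<times> der \<Rightarrow> nat \<times> nat \<times> nat \<times> nat \<times> nat \<times> nat \<times> nat" where
  "rank K = (case K of ((a, b, c, d), (i, j, k)) \<Rightarrow> (i, j, k, c, b, a, d))"

(* Only t-free monomials are compared: the t-terms of R_1, R_2, R_3 never become leading. *)
definition vanishes_above :: "chr \<Rightarrow> mon \<times> der \<Rightarrow> bool" where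
  "vanishes_above f K \<longleftrightarrow> (\<forall>L. t_free L \<and> rank K < rank L \<longrightarrow> f L = 0)"

definition shift :: "nat \<Rightarrow> mon \<times> der \<Rightarrow> mon \<times> der" where
  "shift n K = (case K of ((a, b, c, d), (i, j, k)) \<Rightarrow>
     if n = 1 then ((a + 1, b, c, d), (i, j, k))
     else if n = 2 then ((a, b + 1, c, d), (i, j, k))
     else if n = 3 then ((a, b, c + 1, d), (i, j, k))
     else if n = 4 then ((a, b + 1, c, d), (i + 1, j, k))
     else if n = 5 then ((a, b, c + 1, d), (i + 1, j, k))
     else if n = 6 then ((a, b, c, d), (i + 1, j, k))
     else if n = 7 then ((a, b, c + 1, d), (i, j + 1, k))
     else if n = 8 then ((a, b, c, d), (i, j + 1, k))
     else ((a, b, c, d), (i, j, k + 1)))"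

lemma rank_inject: "rank K = rank L \<longleftrightarrow> K = L"
  by (auto simp: rank_def split: prod.splits)

lemma t_free_shift: "t_free (shift n K) = t_free K"
  by (auto simp: t_free_def shift_def split: prod.splits)

lemma rank_shift_less_iff: "rank (shift n K) < rank (shift n L) \<longleftrightarrow> rank K < rank L"
  by (auto simp: rank_def shift_def less_prod_def split: prod.splits)

lemma vanishes_above_shiftI:
  assumes f: "vanishes_above f K"
    and dep: "\<And>L. t_free L \<Longrightarrow> (\<And>L'. t_free L' \<Longrightarrow> rank L \<le> rank (shift n L') \<Longrightarrow> f L' = 0) \<Longrightarrow> g L = 0"
  shows "vanishes_above g (shift n K)"
  unfolding vanishes_above_def
proof (intro allI impI)
  fix L assume L: "t_free L \<and> rank (shift n K) < rank L"
  show "g L = 0"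
  proof (rule dep)
    fix L' assume "t_free L'" "rank L \<le> rank (shift n L')"
    then have "rank K < rank L'"
      using L rank_shift_less_iff by (metis order_less_le_trans)
    then show "f L' = 0"
      using f \<open>t_free L'\<close> unfolding vanishes_above_def by blast
  qed (use L in simp)
qed

lemma vanishes_above_mul:
  assumes "vanishes_above f K"
  shows "vanishes_above (mulx f) (shift 1 K)" "vanishes_above (muly f) (shift 2 K)"
    "vanishes_above (mulz f) (shift 3 K)"
  by (rule vanishes_above_shiftI[OF assms];
      auto simp: mulx_def muly_def mulz_def shift_def rank_def t_free_def split: prod.splits)+

lemma vanishes_above_D:
  assumes "vanishes_above f K"
  shows "vanishes_above (Dx f) (shift 6 K)" "vanishes_above (Dy f) (shift 8 K)"
    "vanishes_above (Dz f) (shift 9 K)"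
  by (rule vanishes_above_shiftI[OF assms];
      auto simp: Dx_def Dy_def Dz_def shift_def rank_def t_free_def less_prod_def split: prod.splits)+

lemma vanishes_aboveD: "vanishes_above f K \<Longrightarrow> t_free L \<Longrightarrow> rank K < rank L \<Longrightarrow> f L = 0"
  unfolding vanishes_above_def by blast

lemma vanishes_above_mono: "vanishes_above f K' \<Longrightarrow> rank K' \<le> rank K \<Longrightarrow> vanishes_above f K"
  unfolding vanishes_above_def by (meson order_le_less_trans)

lemma vanishes_above_lincomb:
  "vanishes_above f K \<Longrightarrow> vanishes_above g K \<Longrightarrow> vanishes_above (\<lambda>m. c * f m + g m) K"
  unfolding vanishes_above_def by auto

lemma mult_t_free: "t_free L \<Longrightarrow> mult f L = 0"
  by (auto simp: t_free_def mult_def split: prod.splits)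

lemma vanishes_above_mult: "vanishes_above (mult f) K"
  unfolding vanishes_above_def by (auto simp only: mult_t_free)

lemma mul_shift_apply: "mulx f (shift 1 K) = f K" "muly f (shift 2 K) = f K" "mulz f (shift 3 K) = f K"
  by (auto simp: mulx_def muly_def mulz_def shift_def split: prod.splits)

lemma D_shift_apply:
  assumes "vanishes_above f K" "t_free K"
  shows "Dx f (shift 6 K) = f K" "Dy f (shift 8 K) = f K" "Dz f (shift 9 K) = f K"
proof -
  obtain a b c d i j k where K: "K = ((a, b, c, d), (i, j, k))"
    by (metis prod.exhaust)
  have "f ((a + 1, b, c, d), (i + 1, j, k)) = 0" "f ((a, b + 1, c, d), (i, j + 1, k)) = 0"
    "f ((a, b, c + 1, d), (i, j, k + 1)) = 0"
    using assms by (auto intro!: vanishes_aboveD simp: K t_free_def rank_def less_prod_def)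
  then show "Dx f (shift 6 K) = f K" "Dy f (shift 8 K) = f K" "Dz f (shift 9 K) = f K"
    by (simp_all add: K Dx_def Dy_def Dz_def shift_def)
qed

lemma shift_compose: "shift 2 (shift 6 K) = shift 4 K" "shift 3 (shift 6 K) = shift 5 K"
    "shift 3 (shift 8 K) = shift 7 K"
  by (auto simp: shift_def split: prod.splits)

(* In R_4 = - x D_y + y D_x the term y D_x carries the leading monomial; similarly for R_5, R_7. *)
lemma rank_shift_rotation: "rank (shift 1 (shift 8 K)) < rank (shift 4 K)"
    "rank (shift 1 (shift 9 K)) < rank (shift 5 K)" "rank (shift 2 (shift 9 K)) < rank (shift 7 K)"
  by (auto simp: shift_def rank_def less_prod_def split: prod.splits)

lemma vanishes_above_dominant:
  assumes g: "vanishes_above g K" and h: "vanishes_above h K'" and "rank K' < rank K" "t_free K"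
  shows "vanishes_above (\<lambda>m. c * h m + g m) K \<and> c * h K + g K = g K"
  using vanishes_above_lincomb[OF vanishes_above_mono[OF h] g] vanishes_aboveD[OF h] assms(3,4)
  by (simp add: less_imp_le)

lemma vanishes_above_mul_D:
  assumes f: "vanishes_above f K" and K: "t_free K"
  shows "vanishes_above (muly (Dx f)) (shift 4 K) \<and> muly (Dx f) (shift 4 K) = f K"
    "vanishes_above (mulz (Dx f)) (shift 5 K) \<and> mulz (Dx f) (shift 5 K) = f K"
    "vanishes_above (mulz (Dy f)) (shift 7 K) \<and> mulz (Dy f) (shift 7 K) = f K"
  using vanishes_above_mul[OF vanishes_above_D(1)[OF f]] vanishes_above_mul[OF vanishes_above_D(2)[OF f]]
    D_shift_apply[OF f K] mul_shift_apply[of _ "shift 6 K"] mul_shift_apply[of _ "shift 8 K"]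
  by (simp_all add: shift_compose)

lemma R_vanishes_above:
  assumes a: "a \<in> {1..9}" and f: "vanishes_above f K" and K: "t_free K"
  shows "vanishes_above (R a f) (shift a K) \<and> R a f (shift a K) = f K"
proof -
  note mul = vanishes_above_mul[OF f] and D = vanishes_above_D[OF f]
    and rot = vanishes_above_mul_D[OF f K]
  have K': "t_free (shift n K)" for n
    using K by (simp add: t_free_shift)
  show ?thesis
    using one_to_nine_cases[OF a]
  proof (elim disjE)
    assume "a = 1" then show ?thesis unfolding \<open>a = 1\<close>
      using vanishes_above_lincomb[OF vanishes_above_mult mul(1)] mult_t_free[OF K']
      by (simp add: R_def mul_shift_apply[simplified])
  next
    assume "a = 2" then show ?thesis unfolding \<open>a = 2\<close>
      using vanishes_above_lincomb[OF vanishes_above_mult mul(2)] mult_t_free[OF K']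
      by (simp add: R_def mul_shift_apply[simplified])
  next
    assume "a = 3" then show ?thesis unfolding \<open>a = 3\<close>
      using vanishes_above_lincomb[OF vanishes_above_mult mul(3)] mult_t_free[OF K']
      by (simp add: R_def mul_shift_apply[simplified])
  next
    assume "a = 4" then show ?thesis unfolding \<open>a = 4\<close>
      using vanishes_above_dominant[OF rot(1)[THEN conjunct1] vanishes_above_mul(1)[OF D(2)]
          rank_shift_rotation(1) K', of "-1"] rot(1)
      by (simp add: R_def)
  next
    assume "a = 5" then show ?thesis unfolding \<open>a = 5\<close>
      using vanishes_above_dominant[OF rot(2)[THEN conjunct1] vanishes_above_mul(1)[OF D(3)]
          rank_shift_rotation(2) K', of "-1"] rot(2)
      by (simp add: R_def)
  next
    assume "a = 6" then show ?thesis unfolding \<open>a = 6\<close>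
      using D(1) D_shift_apply[OF f K] by (simp add: R_def)
  next
    assume "a = 7" then show ?thesis unfolding \<open>a = 7\<close>
      using vanishes_above_dominant[OF rot(3)[THEN conjunct1] vanishes_above_mul(2)[OF D(3)]
          rank_shift_rotation(3) K', of "-1"] rot(3)
      by (simp add: R_def)
  next
    assume "a = 8" then show ?thesis unfolding \<open>a = 8\<close>
      using D(2) D_shift_apply[OF f K] by (simp add: R_def)
  next
    assume "a = 9" then show ?thesis unfolding \<open>a = 9\<close>
      using D(3) D_shift_apply[OF f K] by (simp add: R_def)
  qed
qed

lemma sum_chr_apply: "(\<Sum>i\<in>I. f i :: chr) x = (\<Sum>i\<in>I. f i x)"
  by (induction I rule: infinite_finite_induct) auto

lemma leading_lincomb_eq_zero:
  assumes fin: "finite I" and inj: "inj_on \<kappa> I"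
    and lead: "\<And>i. i \<in> I \<Longrightarrow> vanishes_above (v i) (\<kappa> i) \<and> v i (\<kappa> i) \<noteq> 0 \<and> t_free (\<kappa> i)"
    and sum: "(\<Sum>i\<in>I. chr_scale (c i) (v i)) = 0"
  shows "\<forall>i\<in>I. c i = 0"
proof (rule ccontr)
  define J where "J = {i \<in> I. c i \<noteq> 0}"
  assume "\<not> (\<forall>i\<in>I. c i = 0)"
  then have "J \<noteq> {}" "finite J"
    using fin by (auto simp: J_def)
  then obtain j where j: "j \<in> J" "rank (\<kappa> j) = Max ((rank \<circ> \<kappa>) ` J)"
    using Max_in[of "(rank \<circ> \<kappa>) ` J"] by fastforce
  have top: "v i (\<kappa> j) = 0" if "i \<in> J" "i \<noteq> j" for i
  proof (rule vanishes_aboveD)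
    have "rank (\<kappa> i) \<le> rank (\<kappa> j)"
      using j(2) \<open>finite J\<close> that(1) by simp
    moreover have "\<kappa> i \<noteq> \<kappa> j"
      using inj that j(1) by (auto simp: J_def inj_on_eq_iff)
    ultimately show "rank (\<kappa> i) < rank (\<kappa> j)"
      by (simp add: order_less_le rank_inject)
  qed (use lead that j(1) in \<open>auto simp: J_def\<close>)
  have "0 = (\<Sum>i\<in>I. chr_scale (c i) (v i)) (\<kappa> j)"
    using sum by simp
  also have "\<dots> = (\<Sum>i\<in>I. c i * v i (\<kappa> j))"
    by (simp add: sum_chr_apply chr_scale_def)
  also have "\<dots> = c j * v j (\<kappa> j) + (\<Sum>i\<in>I - {j}. c i * v i (\<kappa> j))"
    using fin j(1) by (intro sum.remove) (auto simp: J_def)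
  also have "\<dots> = c j * v j (\<kappa> j)"
    using top by (force intro!: sum.neutral simp: J_def)
  also have "\<dots> \<noteq> 0"
    using j(1) lead by (auto simp: J_def)
  finally show False
    by simp
qed

lemma independent_leading:
  assumes fin: "finite I" and inj: "inj_on \<kappa> I"
    and lead: "\<And>i. i \<in> I \<Longrightarrow> vanishes_above (v i) (\<kappa> i) \<and> v i (\<kappa> i) \<noteq> 0 \<and> t_free (\<kappa> i)"
  shows "inj_on v I" "chr.independent (v ` I)"
proof -
  show inj_v: "inj_on v I"
  proof (rule inj_onI)
    fix i j assume ij: "i \<in> I" "j \<in> I" "v i = v j"
    have "\<not> rank (\<kappa> i) < rank (\<kappa> j)" "\<not> rank (\<kappa> j) < rank (\<kappa> i)"
      using lead ij vanishes_aboveD by metis+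
    then have "\<kappa> i = \<kappa> j"
      by (simp add: rank_inject[symmetric])
    then show "i = j"
      using inj ij by (simp add: inj_on_eq_iff)
  qed
  show "chr.independent (v ` I)"
  proof (rule chr.independent_if_scalars_zero)
    fix c x assume "(\<Sum>x\<in>v ` I. chr_scale (c x) x) = 0" "x \<in> v ` I"
    then show "c x = 0"
      using leading_lincomb_eq_zero[OF fin inj lead, of "c \<circ> v"] by (auto simp: sum.reindex[OF inj_v])
  qed (use fin in simp)
qed

definition lead_mon :: "nat list \<Rightarrow> mon \<times> der" where
  "lead_mon w = foldr shift w ((0, 0, 0, 0), (0, 0, 0))"

lemma Rword_leading:
  "set w \<subseteq> {1..9} \<Longrightarrow>
     vanishes_above (Rword w) (lead_mon w) \<and> Rword w (lead_mon w) = 1 \<and> t_free (lead_mon w)"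
proof (induction w)
  case Nil
  show ?case
    by (auto simp: vanishes_above_def Rword_def U_chr_def lead_mon_def t_free_def)
next
  case (Cons a w)
  then show ?case
    using R_vanishes_above[of a "Rword w" "lead_mon w"] by (simp add: lead_mon_def t_free_shift)
qed

lemma lead_mon_count_list:
  "set w \<subseteq> {1..9} \<Longrightarrow> lead_mon w =
     (let c = count_list w in ((c 1, c 2 + c 4, c 3 + c 5 + c 7, 0), (c 4 + c 5 + c 6, c 7 + c 8, c 9)))"
proof (induction w)
  case Nil
  show ?case by (simp add: lead_mon_def)
next
  case (Cons a w)
  then have "a \<in> {1..9}" "lead_mon (a # w) = shift a (lead_mon w)"
    by (simp_all add: lead_mon_def)
  then show ?case
    using Cons by (elim one_to_nine_cases[elim_format] disjE) (auto simp: shift_def Let_def)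
qed

lemma count_list_ordered_word: "count_list (ordered_word e) i = (if i \<in> {1..9} then e i else 0)"
proof -
  have "count_list (ordered_word e) i = (\<Sum>j\<leftarrow>[1..<10]. if i = j then e j else 0)"
    by (simp add: ordered_word_def count_list_eq_length_filter filter_concat length_concat comp_def
        filter_replicate if_distrib[of length]) (simp cong: if_cong)
  also have "\<dots> = (\<Sum>j\<in>{1..<10}. if i = j then e j else 0)"
    by (simp add: sum_list_distinct_conv_sum_set)
  also have "\<dots> = (if i \<in> {1..9} then e i else 0)"
    by (auto simp: sum.delta)
  finally show ?thesis .
qed

lemma lead_mon_ordered_word:
  "lead_mon (ordered_word e) = ((e 1, e 2 + e 4, e 3 + e 5 + e 7, 0), (e 4 + e 5 + e 6, e 7 + e 8, e 9))"
  using lead_mon_count_list[OF set_ordered_word] by (simp add: count_list_ordered_word)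

(* Inverts the leading monomial on standard exponent vectors: the forbidden pairs make
   each min and each difference exact. *)
definition decode :: "mon \<times> der \<Rightarrow> nat \<Rightarrow> nat" where
  "decode K = (case K of ((a, b, c, _), (i, j, k)) \<Rightarrow>
     let e6 = i - (b + c); e4 = min b (i - e6); e5 = i - e6 - e4; e7 = min (c - e5) j
     in (\<lambda>n. if n = 1 then a else if n = 2 then b - e4 else if n = 3 then c - e5 - e7
          else if n = 4 then e4 else if n = 5 then e5 else if n = 6 then e6 else if n = 7 then e7
          else if n = 8 then j - e7 else if n = 9 then k else 0))"

lemma decode_lead_mon:
  assumes e: "e \<in> exponents" and std: "standard e"
  shows "decode (lead_mon (ordered_word e)) = e"
proof -
  have e6: "e 4 + e 5 + e 6 - (e 2 + e 4 + (e 3 + e 5 + e 7)) = e 6"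
    and e4: "min (e 2 + e 4) (e 4 + e 5) = e 4"
    and e7: "min (e 3 + e 7) (e 7 + e 8) = e 7"
    using std by (auto simp: standard_def)
  have "decode (lead_mon (ordered_word e)) n = e n" for n
    using e one_to_nine_cases[of n]
    by (cases "n \<in> {1..9}") (auto simp: decode_def lead_mon_ordered_word Let_def e6 e4 e7 exponents_def)
  then show ?thesis ..
qed

lemma finite_std_exponents: "finite (std_exponents k)"
proof (rule finite_subset)
  show "std_exponents k \<subseteq> {e. \<forall>i. (i \<in> {1..9} \<longrightarrow> e i \<in> {0..k}) \<and> (i \<notin> {1..9} \<longrightarrow> e i = 0)}"
  proof safe
    fix e and i :: nat
    assume e: "e \<in> std_exponents k" and "i \<in> {1..9}"
    then have "e i \<le> deg e"
      unfolding deg_def by (intro member_le_sum) auto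
    then show "e i \<in> {0..k}"
      using e by (simp add: std_exponents_def)
  qed (auto simp: std_exponents_def exponents_def)
  show "finite {e. \<forall>i. (i \<in> {1..9::nat} \<longrightarrow> e i \<in> {0..k}) \<and> (i \<notin> {1..9} \<longrightarrow> e i = 0)}"
    by (intro finite_set_of_finite_funs) auto
qed

lemma std_span_subset_S: "std_span k \<subseteq> S k"
  unfolding std_span_def
  by (rule chr.span_minimal[OF _ S_subspace]) (auto simp: std_exponents_def intro: Rordered_in_S)

lemma dim_S: "chr.dim (S k) = card (std_exponents k)"
proof -
  let ?\<kappa> = "\<lambda>e. lead_mon (ordered_word e)"
  have "inj_on ?\<kappa> (std_exponents k)"
    by (rule inj_on_inverseI[where g = decode]) (simp add: decode_lead_mon std_exponents_def)
  moreover have "vanishes_above (Rordered e) (?\<kappa> e) \<and> Rordered e (?\<kappa> e) \<noteq> 0 \<and> t_free (?\<kappa> e)" for e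
    using Rword_leading[OF set_ordered_word] by (simp add: Rordered_def)
  ultimately have "inj_on Rordered (std_exponents k)" "chr.independent (Rordered ` std_exponents k)"
    using independent_leading[OF finite_std_exponents] by blast+
  moreover have "S k = std_span k"
    using S_subset_std_span std_span_subset_S by blast
  ultimately show ?thesis
    by (simp add: std_span_def chr.dim_eq_card_independent card_image)
qed

section \<open>Counting standard exponent vectors\<close>

definition bounded_exponents :: "nat set \<Rightarrow> nat set \<Rightarrow> nat \<Rightarrow> (nat \<Rightarrow> nat) set" where
  "bounded_exponents J P n = {e. (\<forall>i. i \<notin> J \<longrightarrow> e i = 0) \<and> sum e J \<le> n \<and> (\<forall>p\<in>P. 1 \<le> e p)}"

lemma finite_bounded_exponents:
  assumes "finite J"
  shows "finite (bounded_exponents J P n)"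
proof (rule finite_subset)
  show "bounded_exponents J P n \<subseteq> {e. \<forall>i. (i \<in> J \<longrightarrow> e i \<in> {0..n}) \<and> (i \<notin> J \<longrightarrow> e i = 0)}"
    using assms by (auto simp: bounded_exponents_def intro: order_trans[OF member_le_sum])
  show "finite {e. \<forall>i. (i \<in> J \<longrightarrow> e i \<in> {0..n}) \<and> (i \<notin> J \<longrightarrow> e i = 0)}"
    using assms by (intro finite_set_of_finite_funs) auto
qed

lemma sum_choose_diff: "(\<Sum>j\<in>{0..n}. (n - j + c) choose c) = (n + Suc c) choose Suc c"
proof -
  have "(\<Sum>j\<in>{0..n}. (n - j + c) choose c) = (\<Sum>j\<in>{0..n}. (n - (n + 0 - j) + c) choose c)"
    by (rule sum.atLeastAtMost_rev)
  also have "\<dots> = (\<Sum>j\<le>n. (c + j) choose j)"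
    by (auto simp: atLeast0AtMost binomial_symmetric[of c] add.commute intro: sum.cong)
  also have "\<dots> = Suc (c + n) choose n"
    by (rule sum_choose_lower)
  also have "\<dots> = (n + Suc c) choose Suc c"
    using binomial_symmetric[of n "Suc (c + n)"] by (simp add: add.commute)
  finally show ?thesis .
qed

lemma bounded_exponents_insert:
  assumes J: "finite J" "a \<notin> J"
  shows "bounded_exponents (insert a J) {} n = (\<Union>j\<in>{0..n}. (\<lambda>e. e(a := j)) ` bounded_exponents J {} (n - j))"
proof safe
  fix e assume e: "e \<in> bounded_exponents (insert a J) {} n"
  have "sum (e(a := 0)) J = sum e J"
    using J by (intro sum.cong) auto
  then have "e(a := 0) \<in> bounded_exponents J {} (n - e a)" "e a \<in> {0..n}"
    using e J by (auto simp: bounded_exponents_def)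
  moreover have "e = (e(a := 0))(a := e a)"
    by simp
  ultimately show "e \<in> (\<Union>j\<in>{0..n}. (\<lambda>e. e(a := j)) ` bounded_exponents J {} (n - j))"
    by blast
next
  fix e j assume j: "j \<in> {0..n}" and e: "e \<in> bounded_exponents J {} (n - j)"
  have "sum (e(a := j)) J = sum e J"
    using J by (intro sum.cong) auto
  then show "e(a := j) \<in> bounded_exponents (insert a J) {} n"
    using e j J by (auto simp: bounded_exponents_def)
qed

lemma card_bounded_exponents_empty:
  "finite J \<Longrightarrow> card (bounded_exponents J {} n) = (n + card J) choose card J"
proof (induction J arbitrary: n rule: finite_induct)
  case empty
  have "bounded_exponents {} {} n = {\<lambda>_. 0}"
    by (auto simp: bounded_exponents_def)
  then show ?case
    by simp
next
  case (insert a J)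
  let ?upd = "\<lambda>j e. e(a := j)"
  have inj: "inj_on (?upd j) (bounded_exponents J {} m)" for j m
  proof (rule inj_onI)
    fix e e' assume "e \<in> bounded_exponents J {} m" "e' \<in> bounded_exponents J {} m" "e(a := j) = e'(a := j)"
    then show "e = e'"
      using insert(2) by (auto simp: bounded_exponents_def fun_eq_iff) (metis fun_upd_other)
  qed
  have "card (bounded_exponents (insert a J) {} n) = (\<Sum>j\<in>{0..n}. card (?upd j ` bounded_exponents J {} (n - j)))"
    unfolding bounded_exponents_insert[OF insert(1,2)]
    by (rule card_UN_disjoint) (auto simp: finite_bounded_exponents[OF insert(1)] dest!: fun_cong[where x = a])
  also have "\<dots> = (\<Sum>j\<in>{0..n}. (n - j + card J) choose card J)"
    using inj insert.IH by (simp add: card_image)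
  also have "\<dots> = (n + card (insert a J)) choose card (insert a J)"
    using sum_choose_diff insert by simp
  finally show ?case .
qed

lemma bounded_exponents_shift:
  assumes J: "finite J" and P: "P \<subseteq> J" "card P \<le> n"
  shows "bounded_exponents J P n
    = (\<lambda>e i. e i + (if i \<in> P then 1 else 0)) ` bounded_exponents J {} (n - card P)"
    (is "_ = ?g ` _")
proof -
  have card_P: "sum (\<lambda>i. if i \<in> P then 1 else 0) J = card P"
    using J P by (simp add: sum.If_cases Int_absorb1)
  show ?thesis
  proof safe
    fix e assume e: "e \<in> bounded_exponents J P n"
    let ?h = "\<lambda>i. e i - (if i \<in> P then 1 else 0)"
    have eh: "e = ?g ?h"
      using e by (auto simp: bounded_exponents_def fun_eq_iff)
    have "sum e J = sum ?h J + card P"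
      by (subst eh) (simp add: sum.distrib card_P)
    then have "?h \<in> bounded_exponents J {} (n - card P)"
      using e P by (auto simp: bounded_exponents_def)
    then show "e \<in> ?g ` bounded_exponents J {} (n - card P)"
      by (intro image_eqI[where x = ?h] eh)
  next
    fix e assume e: "e \<in> bounded_exponents J {} (n - card P)"
    have "sum (?g e) J = sum e J + card P"
      by (simp add: sum.distrib card_P)
    then show "?g e \<in> bounded_exponents J P n"
      using e P by (auto simp: bounded_exponents_def)
  qed
qed

lemma bounded_exponents_eq_empty:
  assumes J: "finite J" and P: "P \<subseteq> J" "n < card P"
  shows "bounded_exponents J P n = {}"
proof safe
  fix e assume e: "e \<in> bounded_exponents J P n"
  have "card P = sum (\<lambda>_. 1::nat) P"
    by simp
  also have "\<dots> \<le> sum e P"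
    using e by (intro sum_mono) (auto simp: bounded_exponents_def)
  also have "\<dots> \<le> sum e J"
    using J P by (intro sum_mono2) auto
  also have "\<dots> \<le> n"
    using e by (simp add: bounded_exponents_def)
  finally show "e \<in> {}"
    using P by simp
qed

lemma card_bounded_exponents:
  assumes J: "finite J" and P: "P \<subseteq> J"
  shows "card (bounded_exponents J P n) = (n + card J - card P) choose card J"
proof (cases "card P \<le> n")
  case True
  have "inj_on (\<lambda>e i. e i + (if i \<in> P then 1 else 0)) (bounded_exponents J {} (n - card P))"
    by (rule inj_onI) (auto simp: fun_eq_iff)
  then have "card (bounded_exponents J P n) = card (bounded_exponents J {} (n - card P))"
    by (simp add: bounded_exponents_shift[OF J P True] card_image)
  also have "\<dots> = (n - card P + card J) choose card J"
    using card_bounded_exponents_empty[OF J] .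
  finally show ?thesis
    using True by simp
next
  case False
  then have "n + card J - card P < card J"
    using card_mono[OF J P] by linarith
  then show ?thesis
    using bounded_exponents_eq_empty[OF J P] False by simp
qed

lemma mem_bounded_exponents_iff:
  assumes "J \<subseteq> {1..9}"
  shows "e \<in> bounded_exponents J P n \<longleftrightarrow>
    e \<in> exponents \<and> (\<forall>i\<in>{1..9} - J. e i = 0) \<and> deg e \<le> n \<and> (\<forall>p\<in>P. 1 \<le> e p)"
proof -
  have "(\<forall>i. i \<notin> J \<longrightarrow> e i = 0) \<longleftrightarrow> e \<in> exponents \<and> (\<forall>i\<in>{1..9} - J. e i = 0)"
    using assms unfolding exponents_def by blast
  moreover have "sum e J = deg e" if "\<forall>i\<in>{1..9} - J. e i = 0"
    unfolding deg_def using assms that by (intro sum.mono_neutral_left) auto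
  ultimately show ?thesis
    unfolding bounded_exponents_def by auto
qed

(* Split by which of e 2, e 3, e 6 are positive; the forbidden pairs force the other zeros. *)
lemma std_exponents_split:
  "std_exponents n = bounded_exponents {1,4,5,7,8,9} {} n \<union> bounded_exponents {1,2,4,7,8,9} {2} n
     \<union> bounded_exponents {1,3,4,5,7,9} {3} n \<union> bounded_exponents {1,2,3,4,7,9} {2,3} n
     \<union> bounded_exponents {1,4,5,6,8,9} {6} n"
proof -
  have sub: "{1,4,5,7,8,9} \<subseteq> {1..9::nat}" "{1,2,4,7,8,9} \<subseteq> {1..9::nat}" "{1,3,4,5,7,9} \<subseteq> {1..9::nat}"
    "{1,2,3,4,7,9} \<subseteq> {1..9::nat}" "{1,4,5,6,8,9} \<subseteq> {1..9::nat}"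
    by auto
  have compl: "{1..9} - {1,4,5,7,8,9} = {2,3,6::nat}" "{1..9} - {1,2,4,7,8,9} = {3,5,6::nat}"
    "{1..9} - {1,3,4,5,7,9} = {2,6,8::nat}" "{1..9} - {1,2,3,4,7,9} = {5,6,8::nat}"
    "{1..9} - {1,4,5,6,8,9} = {2,3,7::nat}"
    by auto
  show ?thesis
    unfolding set_eq_iff Un_iff mem_bounded_exponents_iff[OF sub(1)] mem_bounded_exponents_iff[OF sub(2)]
      mem_bounded_exponents_iff[OF sub(3)] mem_bounded_exponents_iff[OF sub(4)] mem_bounded_exponents_iff[OF sub(5)]
      compl std_exponents_def mem_Collect_eq standard_def
    apply (rule allI)
    subgoal for e
      by (cases "e 2 = 0"; cases "e 3 = 0"; cases "e 6 = 0") auto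
    done
qed

lemma card_std_exponents:
  "card (std_exponents n) = (n + 6 choose 6) + 3 * (n + 5 choose 6) + (n + 4 choose 6)"
proof -
  let ?A1 = "bounded_exponents {1,4,5,7,8,9} {} n" and ?A2 = "bounded_exponents {1,2,4,7,8,9} {2} n"
    and ?A3 = "bounded_exponents {1,3,4,5,7,9} {3} n" and ?A4 = "bounded_exponents {1,2,3,4,7,9} {2,3} n"
    and ?A5 = "bounded_exponents {1,4,5,6,8,9} {6} n"
  have card6: "card (bounded_exponents J P n) = q choose 6"
    if "finite J" "P \<subseteq> J" "card J = 6" "n + 6 - card P = q" for J P :: "nat set" and q
    using card_bounded_exponents[OF that(1,2), of n] that(3,4) by (simp only:)
  have "card ?A1 = n + 6 choose 6" "card ?A2 = n + 5 choose 6" "card ?A3 = n + 5 choose 6"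
    "card ?A4 = n + 4 choose 6" "card ?A5 = n + 5 choose 6"
    by (rule card6; simp)+
  moreover have "finite ?A1" "finite ?A2" "finite ?A3" "finite ?A4" "finite ?A5"
    by (simp_all add: finite_bounded_exponents)
  moreover have "?A1 \<inter> ?A2 = {}" "(?A1 \<union> ?A2) \<inter> ?A3 = {}" "(?A1 \<union> ?A2 \<union> ?A3) \<inter> ?A4 = {}"
    "(?A1 \<union> ?A2 \<union> ?A3 \<union> ?A4) \<inter> ?A5 = {}"
    by (auto simp: bounded_exponents_def)
  ultimately show ?thesis
    unfolding std_exponents_split by (simp add: card_Un_disjoint)
qed

lemma real_choose_6:
  "real (m choose 6) = real m * (real m - 1) * (real m - 2) * (real m - 3) * (real m - 4) * (real m - 5) / 720"
  unfolding binomial_gbinomial gbinomial_altdef_of_nat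
  by (simp add: eval_nat_numeral prod.atLeast0_lessThan_Suc field_simps)

theorem mainTheorem1:
  fixes n :: nat
  assumes "n \<ge> 1"
  shows "real (vector_space.dim chr_scale (S n))
     = real ((n+4) * (n+3)^2 * (n+2)^2 * (n+1)) / 144"
  \<comment> \<open>The count is valid for n = 0 as well.\<close>
proof -
  have "vector_space.dim chr_scale (S n) = (n + 6 choose 6) + 3 * (n + 5 choose 6) + (n + 4 choose 6)"
    using dim_S card_std_exponents by simp
  then show ?thesis
    by (simp add: real_choose_6 field_simps power2_eq_square)
qed

end
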